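(* Let $w, v \in \mathfrak{S}_n$ with $v \prec w$ in the Bruhat order, $\textsf{supp}(v) \subsetneq \textsf{supp}(w)$, and $B(w) \cong \mathbf{2} \times B(v)$, where $\mathbf{2}$ is the two-element chain, and let $i$ be the unique element of $\textsf{supp}(w) \setminus \textsf{supp}(v)$. Then the letter $i$ appears exactly once in every reduced word of $w$.
   Context: $\sigma_i$ ($1\le i\le n-1$) is the simple transposition swapping $i$ and $i+1$; products are compositions of maps. A reduced word of $w$ is a word $i_1\cdots i_\ell$ of minimal length $\ell$ with $w=\sigma_{i_1}\cdots\sigma_{i_\ell}$; $R(w)$ is the set of reduced words. $\textsf{supp}(w)$ is the set of letters appearing in (any) reduced word of $w$. Bruhat order: $v \preceq w$ iff some reduced word of $v$ is a subword of some reduced word of $w$; $B(w)=\{u : u \preceq w\}$. (It is known that under these hypotheses $\textsf{supp}(w)\setminus\textsf{supp}(v)$ is a singleton.) *)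

theory Defs
  imports "HOL-Combinatorics.Transposition" "HOL-Combinatorics.Permutations" "HOL-Library.Sublist"
begin

definition sigma :: "nat \<Rightarrow> nat \<Rightarrow> nat" where
  "sigma i = transpose i (Suc i)"

definition word_perm :: "nat list \<Rightarrow> (nat \<Rightarrow> nat)" where
  "word_perm ws = foldr (\<lambda>i f. sigma i \<circ> f) ws id"

definition is_word :: "nat \<Rightarrow> nat list \<Rightarrow> bool" where
  "is_word n ws \<longleftrightarrow> set ws \<subseteq> {1..<n}"

definition reduced_words :: "nat \<Rightarrow> (nat \<Rightarrow> nat) \<Rightarrow> nat list set" where
  "reduced_words n w = {ws. is_word n ws \<and> word_perm ws = w \<and>
      (\<forall>us. is_word n us \<and> word_perm us = w \<longrightarrow> length ws \<le> length us)}"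

definition supp :: "nat \<Rightarrow> (nat \<Rightarrow> nat) \<Rightarrow> nat set" where
  "supp n w = (\<Union>ws\<in>reduced_words n w. set ws)"

definition bruhat_le :: "nat \<Rightarrow> (nat \<Rightarrow> nat) \<Rightarrow> (nat \<Rightarrow> nat) \<Rightarrow> bool" where
  "bruhat_le n v w \<longleftrightarrow> (\<exists>a\<in>reduced_words n v. \<exists>b\<in>reduced_words n w. subseq a b)"

definition bruhat_less :: "nat \<Rightarrow> (nat \<Rightarrow> nat) \<Rightarrow> (nat \<Rightarrow> nat) \<Rightarrow> bool" where
  "bruhat_less n v w \<longleftrightarrow> bruhat_le n v w \<and> v \<noteq> w"

definition bruhat_interval :: "nat \<Rightarrow> (nat \<Rightarrow> nat) \<Rightarrow> (nat \<Rightarrow> nat) set" where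
  "bruhat_interval n w = {u. bruhat_le n u w}"

(* B(w) is isomorphic (as a poset) to 2 x B(v), with 2 = {False < True}
   and the componentwise product order *)
definition iso_two_times :: "nat \<Rightarrow> (nat \<Rightarrow> nat) \<Rightarrow> (nat \<Rightarrow> nat) \<Rightarrow> bool" where
  "iso_two_times n w v \<longleftrightarrow>
     (\<exists>f. bij_betw f (bruhat_interval n w) ((UNIV :: bool set) \<times> bruhat_interval n v) \<and>
       (\<forall>x\<in>bruhat_interval n w. \<forall>y\<in>bruhat_interval n w.
          bruhat_le n x y \<longleftrightarrow> (fst (f x) \<le> fst (f y) \<and> bruhat_le n (snd (f x)) (snd (f y)))))"

end

theory Submission
  imports Defs
begin

(* Write l(u) for the number of inversions of u; it is the common length of all reduced words
   of u. The prefixes of a reduced word of w form a chain of length l(w) in B(w). Its image in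
   2 x B(v) is a strictly increasing chain, so the rank [b] + l(u) of (b, u) grows along it by
   at least one per step; as that rank is at most 1 + l(v), l(w) = l(v) + 1. Hence deleting one
   letter from a reduced word of w gives a reduced word of v, i.e. v = w (p q) for an inversion
   (p, q) of w, and by the strong exchange property every reduced word of w turns into one of v
   after deleting a suitable letter. That word avoids i, so i occurs at most once. It occurs at
   least once: a word avoiding the letter i maps {1..i} to itself, while a reduced word of w
   containing i exactly once shows that w does not. *)

lemma word_perm_Nil [simp]: "word_perm [] = id"
  by (simp add: word_perm_def)

lemma word_perm_Cons [simp]: "word_perm (j # ws) = sigma j \<circ> word_perm ws"
  by (simp add: word_perm_def)

lemma word_perm_append: "word_perm (xs @ ys) = word_perm xs \<circ> word_perm ys"
  by (induction xs) (simp_all add: comp_assoc)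

lemma sigma_apply_self [simp]: "sigma j j = Suc j"
  and sigma_apply_Suc [simp]: "sigma j (Suc j) = j"
  and sigma_sigma [simp]: "sigma j (sigma j x) = x"
  and sigma_comp_sigma [simp]: "sigma j \<circ> sigma j = id"
  by (simp_all add: sigma_def)

lemma sigma_apply_other: "x \<noteq> j \<Longrightarrow> x \<noteq> Suc j \<Longrightarrow> sigma j x = x"
  by (simp add: sigma_def)

lemma sigma_permutes: "1 \<le> j \<Longrightarrow> j < n \<Longrightarrow> sigma j permutes {1..n}"
  unfolding sigma_def by (rule permutes_swap_id) auto

lemma is_word_Nil [simp]: "is_word n []"
  and is_word_Cons [simp]: "is_word n (j # ws) \<longleftrightarrow> j \<in> {1..<n} \<and> is_word n ws"
  and is_word_append [simp]: "is_word n (xs @ ys) \<longleftrightarrow> is_word n xs \<and> is_word n ys"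
  and is_word_rev [simp]: "is_word n (rev ws) \<longleftrightarrow> is_word n ws"
  by (auto simp: is_word_def)

lemma word_perm_permutes: "is_word n ws \<Longrightarrow> word_perm ws permutes {1..n}"
proof (induction ws)
  case (Cons j ws)
  then have "word_perm ws permutes {1..n}" "sigma j permutes {1..n}"
    using sigma_permutes[of j n] by auto
  then show ?case by (simp only: word_perm_Cons permutes_compose)
qed (simp add: permutes_id)

lemma word_perm_rev_apply: "word_perm (rev ws) (word_perm ws x) = x"
  by (induction ws arbitrary: x) (simp_all add: word_perm_append)

lemma word_perm_rev_comp: "word_perm (rev ws) \<circ> word_perm ws = id"
  by (simp add: fun_eq_iff word_perm_rev_apply)

lemma word_perm_rev: "word_perm (rev ws) = inv (word_perm ws)"
  using word_perm_rev_comp[of ws] word_perm_rev_comp[of "rev ws"]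
  by (simp add: inv_unique_comp)

lemma bij_word_perm: "bij (word_perm ws)"
  using word_perm_rev_comp[of ws] word_perm_rev_comp[of "rev ws"]
  by (simp add: o_bij)

lemma reduced_words_append:
  assumes "xs @ ys \<in> reduced_words n g"
  shows "xs \<in> reduced_words n (word_perm xs)" and "ys \<in> reduced_words n (word_perm ys)"
proof -
  have words: "is_word n xs" "is_word n ys"
    using assms by (simp_all add: reduced_words_def)
  have minimal: "length xs + length ys \<le> length us"
    if "is_word n us" "word_perm us = word_perm (xs @ ys)" for us
    using assms that by (auto simp: reduced_words_def)
  show "xs \<in> reduced_words n (word_perm xs)"
    using minimal[of "_ @ ys"] words by (fastforce simp: reduced_words_def word_perm_append)
  show "ys \<in> reduced_words n (word_perm ys)"
    using minimal[of "xs @ _"] words by (fastforce simp: reduced_words_def word_perm_append)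
qed

lemma reduced_words_rev:
  assumes "ws \<in> reduced_words n g"
  shows "rev ws \<in> reduced_words n (inv g)"
proof -
  have g: "word_perm ws = g" "is_word n ws"
    using assms by (simp_all add: reduced_words_def)
  have "length ws \<le> length us" if "is_word n us" "word_perm us = inv g" for us
  proof -
    have "word_perm (rev us) = g"
      using that g bij_word_perm[of ws] by (simp add: word_perm_rev inv_inv_eq)
    then show ?thesis
      using assms that by (auto simp: reduced_words_def dest!: spec[of _ "rev us"])
  qed
  then show ?thesis using g by (simp add: reduced_words_def word_perm_rev)
qed

definition inversions :: "nat \<Rightarrow> (nat \<Rightarrow> nat) \<Rightarrow> (nat \<times> nat) set" where
  "inversions n g = {(p, q). 1 \<le> p \<and> p < q \<and> q \<le> n \<and> g q < g p}"

lemma finite_inversions [simp]: "finite (inversions n g)"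
  by (rule finite_subset[of _ "{1..n} \<times> {1..n}"]) (auto simp: inversions_def)

lemma inversions_id [simp]: "inversions n id = {}"
  by (auto simp: inversions_def)

lemma map_prod_sigma_inversions:
  assumes "1 \<le> j" "j < n" "x \<in> inversions n g - {(j, Suc j)}"
  shows "map_prod (sigma j) (sigma j) x \<in> inversions n (g \<circ> sigma j) - {(j, Suc j)}"
proof -
  obtain p q where x: "x = (p, q)" and pq: "1 \<le> p" "p < q" "q \<le> n" "g q < g p"
    and ne: "(p, q) \<noteq> (j, Suc j)"
    using assms(3) by (auto simp: inversions_def)
  have "sigma j p < sigma j q"
    using pq(2) ne unfolding sigma_def transpose_def by (auto split: if_split)
  moreover have "1 \<le> sigma j p"
    using pq(1) assms(1) unfolding sigma_def transpose_def by (auto split: if_split)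
  moreover have "sigma j q \<le> n"
    using pq(3) assms(2) unfolding sigma_def transpose_def by (auto split: if_split)
  moreover have "(sigma j p, sigma j q) \<noteq> (j, Suc j)"
  proof
    assume "(sigma j p, sigma j q) = (j, Suc j)"
    then have "p = Suc j" "q = j"
      using sigma_sigma[of j p] sigma_sigma[of j q] by auto
    with pq(2) show False by simp
  qed
  ultimately show ?thesis
    using pq(4) by (simp add: x inversions_def)
qed

lemma inversions_comp_sigma:
  assumes "1 \<le> j" "j < n"
  shows "inversions n (g \<circ> sigma j) - {(j, Suc j)}
    = map_prod (sigma j) (sigma j) ` (inversions n g - {(j, Suc j)})"
proof (intro equalityI subsetI)
  fix x assume "x \<in> inversions n (g \<circ> sigma j) - {(j, Suc j)}"
  then have "map_prod (sigma j) (sigma j) x \<in> inversions n g - {(j, Suc j)}"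
    using map_prod_sigma_inversions[OF assms, of x "g \<circ> sigma j"] by (simp add: comp_assoc)
  then show "x \<in> map_prod (sigma j) (sigma j) ` (inversions n g - {(j, Suc j)})"
    by (rule rev_image_eqI) (cases x, simp)
next
  fix x assume "x \<in> map_prod (sigma j) (sigma j) ` (inversions n g - {(j, Suc j)})"
  then obtain y where y: "y \<in> inversions n g - {(j, Suc j)}" "x = map_prod (sigma j) (sigma j) y"
    by (rule imageE)
  show "x \<in> inversions n (g \<circ> sigma j) - {(j, Suc j)}"
    unfolding y(2) by (rule map_prod_sigma_inversions[OF assms y(1)])
qed

lemma card_inversions_comp_sigma:
  assumes "inj g" "1 \<le> j" "j < n"
  shows "card (inversions n (g \<circ> sigma j))
    = (if g j < g (Suc j) then card (inversions n g) + 1 else card (inversions n g) - 1)"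
proof -
  let ?e = "(j, Suc j)"
  have "inj (map_prod (sigma j) (sigma j))"
    using map_prod_inj_on[of "sigma j" UNIV "sigma j" UNIV] by (simp add: sigma_def)
  then have same: "card (inversions n (g \<circ> sigma j) - {?e}) = card (inversions n g - {?e})"
    unfolding inversions_comp_sigma[OF assms(2,3)] by (simp add: card_image inj_on_subset)
  have e_new: "?e \<in> inversions n (g \<circ> sigma j) \<longleftrightarrow> g j < g (Suc j)"
    and e_old: "?e \<in> inversions n g \<longleftrightarrow> g (Suc j) < g j"
    using assms(2,3) by (auto simp: inversions_def)
  have "g j \<noteq> g (Suc j)"
    using assms(1) by (simp add: inj_eq)
  then show ?thesis
    using same e_new e_old card_Suc_Diff1[of "inversions n (g \<circ> sigma j)" ?e]
      card_Suc_Diff1[of "inversions n g" ?e]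
    by (cases "g j < g (Suc j)") (simp_all add: card_Diff_singleton_if)
qed

lemma card_inversions_word_perm_le:
  "is_word n ws \<Longrightarrow> card (inversions n (word_perm ws)) \<le> length ws"
proof (induction ws rule: rev_induct)
  case (snoc j ws)
  then have "1 \<le> j" "j < n" "is_word n ws" by simp_all
  then have "card (inversions n (word_perm ws \<circ> sigma j)) \<le> card (inversions n (word_perm ws)) + 1"
    using card_inversions_comp_sigma[of "word_perm ws" j n] bij_word_perm[of ws]
    by (auto simp: bij_is_inj)
  moreover have "word_perm (ws @ [j]) = word_perm ws \<circ> sigma j"
    by (simp add: word_perm_append)
  ultimately show ?case
    using snoc.IH[OF \<open>is_word n ws\<close>] by (simp only: length_append_singleton)
qed simp

lemma permutes_ascending_eq_id:
  assumes g: "g permutes {1..n}" and asc: "\<And>j. 1 \<le> j \<Longrightarrow> j < n \<Longrightarrow> g j < g (Suc j)"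
  shows "g = id"
proof -
  let ?xs = "map g [1..<Suc n]"
  have "sorted_wrt (<) ?xs"
    unfolding sorted_wrt_iff_nth_Suc_transp[OF transp_on_less] using asc by (simp del: upt_Suc)
  then have "sorted ?xs" "distinct ?xs"
    by (simp_all add: strict_sorted_iff)
  moreover have "set ?xs = set [1..<Suc n]"
    using permutes_image[OF g] by (simp del: upt_Suc add: atLeastLessThanSuc_atLeastAtMost)
  ultimately have "?xs = map id [1..<Suc n]"
    using sorted_distinct_set_unique[of ?xs "[1..<Suc n]"] by (simp del: upt_Suc)
  then have "g x = x" if "x \<in> {1..n}" for x
    using that unfolding map_eq_conv by (simp del: upt_Suc add: atLeastLessThanSuc_atLeastAtMost)
  moreover have "g x = x" if "x \<notin> {1..n}" for x
    using permutes_not_in[OF g that] .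
  ultimately show ?thesis
    by (metis eq_id_iff)
qed

lemma permutes_descent:
  assumes g: "g permutes {1..n}" and "g \<noteq> id"
  obtains j where "1 \<le> j" "j < n" "g (Suc j) < g j"
proof -
  have "g j \<noteq> g (Suc j)" for j
    using permutes_inj[OF g] by (simp add: inj_eq)
  then show ?thesis
    using that permutes_ascending_eq_id[OF g] assms(2) by (meson linorder_neqE_nat)
qed

lemma exists_word_length_inversions:
  "g permutes {1..n} \<Longrightarrow> \<exists>ws. is_word n ws \<and> word_perm ws = g \<and> length ws = card (inversions n g)"
proof (induction "card (inversions n g)" arbitrary: g)
  case 0
  have "g = id"
  proof (rule ccontr)
    assume "g \<noteq> id"
    then obtain j where "1 \<le> j" "j < n" "g (Suc j) < g j"
      using permutes_descent[OF 0(2)] by blast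
    then have "(j, Suc j) \<in> inversions n g" by (simp add: inversions_def)
    then show False using 0(1) by simp
  qed
  then show ?case
    using 0(1) by (intro exI[of _ "[]"]) (simp add: is_word_def)
next
  case (Suc k)
  then have "g \<noteq> id"
    by (metis card.empty inversions_id nat.distinct(1))
  then obtain j where j: "1 \<le> j" "j < n" "g (Suc j) < g j"
    using permutes_descent[OF Suc(3)] by blast
  have "g \<circ> sigma j permutes {1..n}"
    using sigma_permutes[OF j(1,2)] Suc(3) by (rule permutes_compose)
  moreover have "card (inversions n (g \<circ> sigma j)) = k"
    using card_inversions_comp_sigma[OF permutes_inj[OF Suc(3)] j(1,2)] j(3) Suc(2) by simp
  ultimately obtain ws where "is_word n ws" "word_perm ws = g \<circ> sigma j" "length ws = k"
    using Suc(1) by metis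
  then show ?case
    using j Suc(2) by (intro exI[of _ "ws @ [j]"]) (simp add: word_perm_append comp_assoc)
qed

lemma reduced_words_iff:
  "ws \<in> reduced_words n g \<longleftrightarrow> is_word n ws \<and> word_perm ws = g \<and> length ws = card (inversions n g)"
proof
  assume ws: "ws \<in> reduced_words n g"
  then have word: "is_word n ws" "word_perm ws = g"
    by (simp_all add: reduced_words_def)
  obtain us where "is_word n us" "word_perm us = g" "length us = card (inversions n g)"
    using exists_word_length_inversions[OF word_perm_permutes[OF word(1)]] word(2) by blast
  then have "length ws \<le> card (inversions n g)"
    using ws by (auto simp: reduced_words_def)
  moreover have "card (inversions n g) \<le> length ws"
    using card_inversions_word_perm_le[OF word(1)] word(2) by simp
  ultimately show "is_word n ws \<and> word_perm ws = g \<and> length ws = card (inversions n g)"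
    using word by simp
next
  assume "is_word n ws \<and> word_perm ws = g \<and> length ws = card (inversions n g)"
  then show "ws \<in> reduced_words n g"
    using card_inversions_word_perm_le by (fastforce simp: reduced_words_def)
qed

lemma reduced_words_nonempty:
  "g permutes {1..n} \<Longrightarrow> \<exists>ws. ws \<in> reduced_words n g"
  using exists_word_length_inversions by (simp add: reduced_words_iff)

lemma ascent_if_reduced_snoc:
  assumes "xs @ [j] \<in> reduced_words n g"
  shows "word_perm xs j < word_perm xs (Suc j)"
proof (rule ccontr)
  assume desc: "\<not> word_perm xs j < word_perm xs (Suc j)"
  have "xs \<in> reduced_words n (word_perm xs)"
    using reduced_words_append(1)[OF assms] .
  then have "card (inversions n (word_perm xs)) = length xs"
    by (simp add: reduced_words_iff)
  moreover have "card (inversions n (word_perm xs \<circ> sigma j)) = length xs + 1"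
    using assms by (simp add: reduced_words_iff word_perm_append)
  moreover have "1 \<le> j" "j < n"
    using assms by (simp_all add: reduced_words_iff)
  ultimately show False
    using card_inversions_comp_sigma[of "word_perm xs" j n] bij_word_perm[of xs] desc
    by (simp add: bij_is_inj)
qed

definition remove_nth :: "nat \<Rightarrow> 'a list \<Rightarrow> 'a list" where
  "remove_nth m xs = take m xs @ drop (Suc m) xs"

lemma remove_nthE:
  assumes "m < length xs"
  obtains A y B where "xs = A @ y # B" "remove_nth m xs = A @ B" "length A = m"
  using id_take_nth_drop[OF assms] assms
  by (intro that[of "take m xs" "xs ! m" "drop (Suc m) xs"]) (simp_all add: remove_nth_def)

lemma set_remove_nth_subset: "set (remove_nth m xs) \<subseteq> set xs"
  by (auto simp: remove_nth_def dest: in_set_takeD in_set_dropD)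

lemma length_remove_nth: "m < length xs \<Longrightarrow> length (remove_nth m xs) = length xs - 1"
  by (simp add: remove_nth_def)

lemma word_perm_remove_nth:
  assumes ws: "ws \<in> reduced_words n w" and m: "m < length ws"
  shows "\<exists>(p, q) \<in> inversions n w. word_perm (remove_nth m ws) = w \<circ> transpose p q"
proof -
  obtain xs j ys where split: "ws = xs @ j # ys" and remove: "remove_nth m ws = xs @ ys"
    using remove_nthE[OF m] by blast
  let ?a = "word_perm xs" and ?b = "word_perm ys"
  define p q where "p = inv ?b j" and "q = inv ?b (Suc j)"
  have "(xs @ [j]) @ ys \<in> reduced_words n w"
    using ws by (simp add: split)
  then have asc_a: "?a j < ?a (Suc j)"
    by (rule ascent_if_reduced_snoc[OF reduced_words_append(1)])
  have "rev ys @ [j] \<in> reduced_words n (inv (word_perm (j # ys)))"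
    using reduced_words_rev[OF reduced_words_append(2)[of xs "j # ys"]] ws by (simp add: split)
  then have "p < q"
    using ascent_if_reduced_snoc by (fastforce simp: p_def q_def word_perm_rev)
  have b: "?b p = j" "?b q = Suc j"
    using bij_word_perm[of ys] by (simp_all add: p_def q_def bij_inv_eq_iff[symmetric])
  have w: "w = ?a \<circ> ?b \<circ> transpose p q"
  proof -
    have "w = ?a \<circ> (transpose j (Suc j) \<circ> ?b)"
      using ws by (simp add: split reduced_words_iff word_perm_append sigma_def)
    then show ?thesis
      using transpose_comp_eq[OF bij_word_perm[of ys]] by (simp add: p_def q_def comp_assoc)
  qed
  have "is_word n ys" "j \<in> {1..<n}"
    using ws by (simp_all add: split reduced_words_iff)
  then have "p \<in> {1..n}" "q \<in> {1..n}"
    using permutes_in_image[OF permutes_inv[OF word_perm_permutes]] by (auto simp: p_def q_def)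
  then have "(p, q) \<in> inversions n w"
    using \<open>p < q\<close> asc_a b by (simp add: w inversions_def)
  moreover have "word_perm (remove_nth m ws) = w \<circ> transpose p q"
    by (simp add: w remove word_perm_append comp_assoc)
  ultimately show ?thesis by blast
qed

lemma bij_comp_cancel:
  assumes "a \<circ> f \<circ> c = a \<circ> g \<circ> c" "bij a" "bij c"
  shows "f = g"
proof
  fix x
  obtain y where "c y = x"
    using bij_is_surj[OF assms(3)] by (metis surjD)
  then have "a (f x) = a (g x)"
    using fun_cong[OF assms(1), of y] by simp
  then show "f x = g x"
    using bij_is_inj[OF assms(2)] by (simp add: inj_eq)
qed

lemma inj_on_word_perm_remove_nth:
  assumes ws: "ws \<in> reduced_words n w"
  shows "inj_on (\<lambda>m. word_perm (remove_nth m ws)) {..<length ws}"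
proof (rule linorder_inj_onI')
  fix m1 m2 assume m: "m1 \<in> {..<length ws}" "m2 \<in> {..<length ws}" "m1 < m2"
  obtain A j1 R where ws_AR: "ws = A @ j1 # R" "remove_nth m1 ws = A @ R" and A: "length A = m1"
    using remove_nthE[of m1 ws] m by auto
  moreover have "m2 - Suc m1 < length R"
    using m ws_AR A by auto
  ultimately obtain B j2 C where R: "R = B @ j2 # C" and B: "length B = m2 - Suc m1"
    by (elim remove_nthE)
  have split: "ws = A @ j1 # B @ j2 # C"
    using ws_AR R by simp
  have "m2 = Suc (length A + length B)"
    using A B m(3) by simp
  then have remove: "remove_nth m1 ws = A @ B @ j2 # C" "remove_nth m2 ws = A @ j1 # B @ C"
    using ws_AR R by (simp_all add: split remove_nth_def)
  let ?a = "word_perm A" and ?b = "word_perm B" and ?c = "word_perm C"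
  show "word_perm (remove_nth m1 ws) \<noteq> word_perm (remove_nth m2 ws)"
  proof
    assume "word_perm (remove_nth m1 ws) = word_perm (remove_nth m2 ws)"
    then have "?a \<circ> (?b \<circ> sigma j2) \<circ> ?c = ?a \<circ> (sigma j1 \<circ> ?b) \<circ> ?c"
      by (simp add: remove word_perm_append comp_assoc)
    then have commute: "?b \<circ> sigma j2 = sigma j1 \<circ> ?b"
      using bij_word_perm[of A] bij_word_perm[of C] by (rule bij_comp_cancel)
    have "w = ?a \<circ> sigma j1 \<circ> (?b \<circ> sigma j2) \<circ> ?c"
      using ws by (simp add: split reduced_words_iff word_perm_append comp_assoc)
    also have "\<dots> = ?a \<circ> (sigma j1 \<circ> sigma j1) \<circ> ?b \<circ> ?c"
      by (simp only: commute comp_assoc)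
    also have "\<dots> = word_perm (A @ B @ C)"
      by (simp add: word_perm_append comp_assoc)
    finally have "word_perm (A @ B @ C) = w" ..
    moreover have "is_word n (A @ B @ C)"
      using ws by (simp add: split reduced_words_iff)
    ultimately have "length ws \<le> length (A @ B @ C)"
      using ws unfolding reduced_words_def by blast
    then show False
      by (simp add: split)
  qed
qed

lemma strong_exchange:
  assumes ws: "ws \<in> reduced_words n w" and pq: "(p, q) \<in> inversions n w"
  shows "\<exists>m<length ws. word_perm (remove_nth m ws) = w \<circ> transpose p q"
proof -
  let ?T = "(\<lambda>(p, q). w \<circ> transpose p q) ` inversions n w"
  let ?D = "(\<lambda>m. word_perm (remove_nth m ws)) ` {..<length ws}"
  have "?D \<subseteq> ?T"
  proof
    fix u assume "u \<in> ?D"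
    then obtain m where "m < length ws" "u = word_perm (remove_nth m ws)"
      by blast
    then obtain p' q' where "(p', q') \<in> inversions n w" "u = w \<circ> transpose p' q'"
      using word_perm_remove_nth[OF ws] by blast
    then show "u \<in> ?T"
      by (intro image_eqI[where x = "(p', q')"]) simp_all
  qed
  moreover have "card ?D = length ws"
    using card_image[OF inj_on_word_perm_remove_nth[OF ws]] by simp
  moreover have "card ?T \<le> length ws"
    using card_image_le[OF finite_inversions] ws by (simp add: reduced_words_iff)
  ultimately have "?D = ?T"
    using card_mono[of ?T ?D] by (intro card_subset_eq) simp_all
  moreover have "w \<circ> transpose p q \<in> ?T"
    using pq by (intro image_eqI[where x = "(p, q)"]) simp_all
  ultimately have "w \<circ> transpose p q \<in> ?D"
    by simp
  then show ?thesis
    by auto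
qed

lemma bruhat_le_card_inversions:
  assumes "bruhat_le n u v"
  shows "card (inversions n u) \<le> card (inversions n v)"
proof -
  obtain a b where "a \<in> reduced_words n u" "b \<in> reduced_words n v" "subseq a b"
    using assms by (auto simp: bruhat_le_def)
  then show ?thesis
    using list_emb_length[of _ a b] by (simp add: reduced_words_iff)
qed

lemma bruhat_less_card_inversions:
  assumes "bruhat_less n u v"
  shows "card (inversions n u) < card (inversions n v)"
proof -
  obtain a b where ab: "a \<in> reduced_words n u" "b \<in> reduced_words n v" "subseq a b"
    and "u \<noteq> v"
    using assms by (auto simp: bruhat_less_def bruhat_le_def)
  then have "a \<noteq> b"
    by (auto simp: reduced_words_iff)
  then have "length a < length b"
    using ab(3) subseq_same_length list_emb_length[of _ a b] by fastforce
  then show ?thesis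
    using ab by (simp add: reduced_words_iff)
qed

lemma bruhat_le_take:
  assumes ws: "ws \<in> reduced_words n w" and "k \<le> l"
  shows "bruhat_le n (word_perm (take k ws)) (word_perm (take l ws))"
proof -
  have l: "take l ws \<in> reduced_words n (word_perm (take l ws))"
    using reduced_words_append(1)[of "take l ws" "drop l ws"] ws by simp
  have "take k (take l ws) @ drop k (take l ws) \<in> reduced_words n (word_perm (take l ws))"
    using l by (simp only: append_take_drop_id)
  then have "take k (take l ws) \<in> reduced_words n (word_perm (take k ws))"
    using reduced_words_append(1) \<open>k \<le> l\<close> by (fastforce simp: min_absorb1)
  moreover have "subseq (take k (take l ws)) (take l ws)"
    by (rule prefix_imp_subseq) (rule take_is_prefix)
  ultimately show ?thesis
    using l unfolding bruhat_le_def by blast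
qed

lemma bruhat_less_take_Suc:
  assumes ws: "ws \<in> reduced_words n w" and "k < length ws"
  shows "bruhat_less n (word_perm (take k ws)) (word_perm (take (Suc k) ws))"
proof -
  have card: "card (inversions n (word_perm (take l ws))) = l" if "l \<le> length ws" for l
    using reduced_words_append(1)[of "take l ws" "drop l ws"] ws that
    by (simp add: reduced_words_iff)
  then have "card (inversions n (word_perm (take k ws))) = k"
    and "card (inversions n (word_perm (take (Suc k) ws))) = Suc k"
    using \<open>k < length ws\<close> by simp_all
  then have "word_perm (take k ws) \<noteq> word_perm (take (Suc k) ws)"
    by auto
  then show ?thesis
    using bruhat_le_take[OF ws, of k "Suc k"] by (simp add: bruhat_less_def)
qed

lemma card_inversions_le_if_iso_two_times:
  assumes w: "w permutes {1..n}" and iso: "iso_two_times n w v"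
  shows "card (inversions n w) \<le> card (inversions n v) + 1"
proof -
  obtain f where f: "bij_betw f (bruhat_interval n w) ((UNIV :: bool set) \<times> bruhat_interval n v)"
    and order: "\<forall>x\<in>bruhat_interval n w. \<forall>y\<in>bruhat_interval n w.
        bruhat_le n x y \<longleftrightarrow> fst (f x) \<le> fst (f y) \<and> bruhat_le n (snd (f x)) (snd (f y))"
    using iso unfolding iso_two_times_def by blast
  define rank where "rank x = of_bool (fst (f x)) + card (inversions n (snd (f x)))" for x
  have rank_less: "rank x < rank y"
    if xy: "x \<in> bruhat_interval n w" "y \<in> bruhat_interval n w" "bruhat_less n x y" for x y
  proof -
    have "f x \<noteq> f y"
      using xy bij_betw_imp_inj_on[OF f] by (auto simp: bruhat_less_def inj_on_eq_iff)
    moreover have "fst (f x) \<le> fst (f y)" "bruhat_le n (snd (f x)) (snd (f y))"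
      using order xy by (simp_all add: bruhat_less_def)
    ultimately show ?thesis
      using bruhat_less_card_inversions[of n "snd (f x)" "snd (f y)"]
      by (cases "snd (f x) = snd (f y)") (auto simp: rank_def bruhat_less_def prod_eq_iff le_bool_def)
  qed
  obtain ws where ws: "ws \<in> reduced_words n w"
    using reduced_words_nonempty[OF w] by blast
  have prefix_mem: "word_perm (take k ws) \<in> bruhat_interval n w" if "k \<le> length ws" for k
    using bruhat_le_take[OF ws that] ws by (simp add: bruhat_interval_def reduced_words_iff)
  have "k \<le> rank (word_perm (take k ws))" if "k \<le> length ws" for k
    using that
  proof (induction k)
    case (Suc k)
    then have "rank (word_perm (take k ws)) < rank (word_perm (take (Suc k) ws))"
      using rank_less[OF prefix_mem prefix_mem bruhat_less_take_Suc[OF ws]] by simp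
    then show ?case
      using Suc by simp
  qed simp
  from this[of "length ws"] have "length ws \<le> rank w"
    using ws by (simp add: reduced_words_iff)
  moreover have "snd (f w) \<in> bruhat_interval n v"
    using bij_betwE[OF f] prefix_mem[of "length ws"] ws by (force simp: reduced_words_iff)
  then have "card (inversions n (snd (f w))) \<le> card (inversions n v)"
    by (simp add: bruhat_interval_def bruhat_le_card_inversions)
  then have "rank w \<le> 1 + card (inversions n v)"
    by (simp add: rank_def)
  ultimately show ?thesis
    using ws by (simp add: reduced_words_iff)
qed

lemma subseq_Suc_length_remove_nth:
  "subseq xs ys \<Longrightarrow> length ys = Suc (length xs) \<Longrightarrow> \<exists>m<length ys. xs = remove_nth m ys"
proof (induction ys arbitrary: xs)
  case (Cons y ys)
  show ?case
  proof (cases "subseq xs ys")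
    case True
    then have "xs = ys"
      using subseq_same_length[OF True] Cons.prems(2) by simp
    then show ?thesis
      by (intro exI[of _ 0]) (simp add: remove_nth_def)
  next
    case False
    then obtain xs' where xs: "xs = y # xs'" "subseq xs' ys"
      using Cons.prems(1) by (cases xs) (auto split: if_splits)
    then obtain m where "m < length ys" "xs' = remove_nth m ys"
      using Cons.IH Cons.prems(2) by auto
    then show ?thesis
      using xs by (intro exI[of _ "Suc m"]) (simp add: remove_nth_def)
  qed
qed simp

lemma bruhat_le_Suc_length_transposition:
  assumes "bruhat_le n v w" "card (inversions n w) = card (inversions n v) + 1"
  obtains p q where "(p, q) \<in> inversions n w" "v = w \<circ> transpose p q"
proof -
  obtain a b where ab: "a \<in> reduced_words n v" "b \<in> reduced_words n w" "subseq a b"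
    using assms(1) by (auto simp: bruhat_le_def)
  then have "length b = Suc (length a)"
    using assms(2) by (simp add: reduced_words_iff)
  then obtain m where "m < length b" "a = remove_nth m b"
    using subseq_Suc_length_remove_nth[OF ab(3)] by blast
  then obtain p q where "(p, q) \<in> inversions n w" "word_perm a = w \<circ> transpose p q"
    using word_perm_remove_nth[OF ab(2)] by blast
  moreover have "word_perm a = v"
    using ab(1) by (simp add: reduced_words_iff)
  ultimately show ?thesis
    using that by simp
qed

lemma exists_remove_nth_reduced_word:
  assumes ws: "ws \<in> reduced_words n w" and "bruhat_le n v w"
    and len: "card (inversions n w) = card (inversions n v) + 1"
  shows "\<exists>m<length ws. remove_nth m ws \<in> reduced_words n v"
proof -
  obtain p q where "(p, q) \<in> inversions n w" "v = w \<circ> transpose p q"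
    using bruhat_le_Suc_length_transposition[OF assms(2) len] by blast
  then obtain m where "m < length ws" "word_perm (remove_nth m ws) = v"
    using strong_exchange[OF ws] by blast
  moreover have "is_word n (remove_nth m ws)"
    using ws set_remove_nth_subset[of m ws] by (auto simp: reduced_words_iff is_word_def)
  ultimately show ?thesis
    using ws len by (auto simp: reduced_words_iff length_remove_nth)
qed

lemma count_list_le_one_if_notin_remove_nth:
  assumes "m < length xs" "x \<notin> set (remove_nth m xs)"
  shows "count_list xs x \<le> 1"
proof -
  obtain A y B where "xs = A @ y # B" "remove_nth m xs = A @ B"
    using remove_nthE[OF assms(1)] by blast
  then show ?thesis
    using assms(2) by simp
qed

lemma word_perm_le_iff:
  "i \<notin> set ws \<Longrightarrow> word_perm ws z \<le> i \<longleftrightarrow> z \<le> i"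
proof (induction ws arbitrary: z)
  case (Cons j ws)
  then have "j \<noteq> i"
    by simp
  then have "sigma j y \<le> i \<longleftrightarrow> y \<le> i" for y
    by (cases "y = j"; cases "y = Suc j") (auto simp: sigma_apply_other)
  then show ?case
    using Cons by simp
qed simp

lemma mem_if_single_occurrence:
  assumes "word_perm (xs @ i # ys) = word_perm ws" "i \<notin> set xs" "i \<notin> set ys"
  shows "i \<in> set ws"
proof (rule ccontr)
  assume notin: "i \<notin> set ws"
  obtain z where z: "i = word_perm ys z"
    using surjD[OF bij_is_surj[OF bij_word_perm]] by blast
  then have "word_perm ws z \<le> i"
    using word_perm_le_iff[OF assms(3), of z] word_perm_le_iff[OF notin, of z] by simp
  moreover have "word_perm ws z = word_perm xs (Suc i)"
    using assms(1)[symmetric] z by (simp add: word_perm_append)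
  moreover have "\<not> word_perm xs (Suc i) \<le> i"
    using word_perm_le_iff[OF assms(2), of "Suc i"] by simp
  ultimately show False
    by simp
qed

lemma count_list_eq_one_if_remove_nth_avoids:
  assumes avoid: "\<And>ws. ws \<in> reduced_words n w \<Longrightarrow> \<exists>m<length ws. i \<notin> set (remove_nth m ws)"
    and "i \<in> supp n w" and ws: "ws \<in> reduced_words n w"
  shows "count_list ws i = 1"
proof -
  obtain ws0 where ws0: "ws0 \<in> reduced_words n w" "i \<in> set ws0"
    using assms(2) by (auto simp: supp_def)
  then obtain m where m: "m < length ws0" "i \<notin> set (remove_nth m ws0)"
    using avoid by blast
  then obtain xs y ys where ws0_split: "ws0 = xs @ y # ys" "remove_nth m ws0 = xs @ ys"
    by (elim remove_nthE)
  then have "y = i" "i \<notin> set xs" "i \<notin> set ys"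
    using m(2) ws0(2) by auto
  have "word_perm (xs @ i # ys) = word_perm ws"
    using ws ws0(1) ws0_split(1) \<open>y = i\<close> by (simp add: reduced_words_iff)
  then have "i \<in> set ws"
    using mem_if_single_occurrence \<open>i \<notin> set xs\<close> \<open>i \<notin> set ys\<close> by blast
  then have "count_list ws i \<noteq> 0"
    by (simp add: count_list_0_iff)
  moreover obtain k where "k < length ws" "i \<notin> set (remove_nth k ws)"
    using avoid[OF ws] by blast
  then have "count_list ws i \<le> 1"
    by (rule count_list_le_one_if_notin_remove_nth)
  ultimately show ?thesis
    by linarith
qed

theorem corollary2p2:
  fixes n :: nat and w v :: "nat \<Rightarrow> nat" and i :: nat
  assumes "w permutes {1..n}" and "v permutes {1..n}"
    and "bruhat_less n v w"
    and "supp n v \<subset> supp n w"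
    and "iso_two_times n w v"
    and "i \<in> supp n w - supp n v"
  shows "\<forall>ws\<in>reduced_words n w. count_list ws i = 1"
proof -
  have vw: "bruhat_le n v w"
    using assms(3) by (simp add: bruhat_less_def)
  have len: "card (inversions n w) = card (inversions n v) + 1"
    using card_inversions_le_if_iso_two_times[OF assms(1,5)] bruhat_less_card_inversions[OF assms(3)]
    by linarith
  have avoid: "\<exists>m<length ws. i \<notin> set (remove_nth m ws)" if ws: "ws \<in> reduced_words n w" for ws
  proof -
    obtain m where "m < length ws" "remove_nth m ws \<in> reduced_words n v"
      using exists_remove_nth_reduced_word[OF ws vw len] by blast
    moreover from this(2) have "set (remove_nth m ws) \<subseteq> supp n v"
      by (auto simp: supp_def)
    ultimately show ?thesis
      using assms(6) by blast
  qed
  then show ?thesis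
    using count_list_eq_one_if_remove_nth_avoids assms(6) by blast
qed

end
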